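(* Let $n\ge 2$, $q\ge 2$ be integers, $S_1=\sqrt{q^2+4(q-1)(n-2)}$, let $d$ be an integer and define $j$ by $d=n-1-\frac{n-2+j}{q}$ with $j\in\left[0,\frac{S_1-q}{2}\right)$. Put $d_0=n-\frac{j(n-1)}{q(j+q-1)}$ and let $e\in(0,1]$ be such that $d_0+e$ is an integer. Define $$\begin{aligned} A&=-(q+j-2)[eq(j+q-1)]^2+(n-1)(q-1)(j+q)[n(q-1)-j(q+j-2)]\\&\quad+eq(j+q-1)[(q^2+jq-q-2j)(q+j-2)+2n(q-1)],\\ B&=(n-2+j)(q-1)+j(j-1)+eq(j+q-1),\\ C&=(n-1)(q-1)(j+q)+eq(j+q-1),\\ D&=\Big[(n-1)(q-1)+(2e-1)(j+q-1)\tfrac{q}{2}\Big]^2+(j+q-1)^2\Big[(n-1)(q-1)-\tfrac{q^2}{4}\Big],\\ E&=(j+q-1)^3[(n-1)(q-2)+n-j], \end{aligned}$$ and $$\mu_d^*=\frac{n(q-1)CD[C+q(j+q-1)]}{AB[B+q(j+q-1)]},\quad \mu_{d_0+e-1}^*=\frac{en(q-1)E[C+q(j+q-1)]}{AB},\quad \mu_{d_0+e}^*=\frac{(1-e)n(q-1)CE}{A[B+q(j+q-1)]}.$$ Then for each $l\in\{1,2,3\}$, $$\mu_d^*\frac{K_l^{(n,q)}(d)}{r_l}+\mu_{d_0+e-1}^*\frac{K_l^{(n,q)}(d_0+e-1)}{r_l}+\mu_{d_0+e}^*\frac{K_l^{(n,q)}(d_0+e)}{r_l}=-1.$$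
   Context: $K_l^{(n,q)}(z)=\sum_{i=0}^{l}(-1)^i(q-1)^{l-i}\binom{z}{i}\binom{n-z}{l-i}$ is the Krawtchouk polynomial and $r_l=(q-1)^l\binom{n}{l}$. *)

theory Defs
  imports Complex_Main
begin

text \<open>Krawtchouk polynomial K_l^{(n,q)}(z), evaluated at a real argument z
  (binomials via generalized binomial coefficients, which agree with the usual
  ones at integer arguments).\<close>
definition krawtchouk :: "nat \<Rightarrow> nat \<Rightarrow> nat \<Rightarrow> real \<Rightarrow> real" where
  "krawtchouk n q l z =
     (\<Sum>i=0..l. (-1)^i * (real q - 1)^(l - i) * (z gchoose i) * ((real n - z) gchoose (l - i)))"

definition rK :: "nat \<Rightarrow> nat \<Rightarrow> nat \<Rightarrow> real" where
  "rK n q l = (real q - 1)^l * real (n choose l)"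

end

theory Submission
  imports Defs
begin

text \<open>Since d = x/q and d0 + e = y/W with x = q(n - 1) - (n - 2 + j), y = nW - j(n - 1) + eW and
  W = q(j + q - 1), each Krawtchouk value is a homogeneous polynomial in (x, q) or (y, W) divided by
  l! q^l or l! W^l. Clearing the denominators l! q^l W^l A B (B + W), the three claimed identities
  become polynomial identities in n, q, j, e that hold identically. The hypotheses only make the
  denominators nonzero: B > 0 is immediate, and A is a nonnegative combination of
  P = n(q - 1) - j(q + j - 2), which is positive because j < (S1 - q)/2 means
  j(j + q) < (q - 1)(n - 2); the same inequality forces n \<ge> 3, so r_3 \<noteq> 0.\<close>

lemma gchoose_homogeneous:
  fixes z s :: real
  assumes "s \<noteq> 0"
  shows "fact k * s ^ k * ((z / s) gchoose k) = (\<Prod>i = 0..<k. z - of_nat i * s)"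
proof -
  have "fact k * s ^ k * ((z / s) gchoose k) = s ^ k * (\<Prod>i = 0..<k. z / s - of_nat i)"
    by (simp add: gbinomial_mult_fact)
  also have "\<dots> = (\<Prod>i = 0..<k. s * (z / s - of_nat i))"
    by (simp add: prod.distrib)
  also have "\<dots> = (\<Prod>i = 0..<k. z - of_nat i * s)"
    using assms by (simp add: algebra_simps)
  finally show ?thesis .
qed

definition krawtchouk_hom :: "nat \<Rightarrow> nat \<Rightarrow> nat \<Rightarrow> real \<Rightarrow> real \<Rightarrow> real" where
  "krawtchouk_hom n q l z s = (\<Sum>i = 0..l. (-1) ^ i * (real q - 1) ^ (l - i) * real (l choose i)
     * (\<Prod>k = 0..<i. z - of_nat k * s) * (\<Prod>k = 0..<l - i. real n * s - z - of_nat k * s))"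

lemma krawtchouk_homogeneous:
  fixes z s :: real
  assumes "s \<noteq> 0"
  shows "fact l * s ^ l * krawtchouk n q l (z / s) = krawtchouk_hom n q l z s"
  unfolding krawtchouk_def krawtchouk_hom_def sum_distrib_left
proof (rule sum.cong)
  fix i assume "i \<in> {0..l}"
  then have il: "i \<le> l" by simp
  have fact_split: "fact l = real (l choose i) * fact i * fact (l - i)"
    using arg_cong[OF binomial_fact_lemma[OF il], of real] by (simp add: algebra_simps)
  have "real n - z / s = (real n * s - z) / s"
    using assms by (simp add: field_simps)
  then have right: "fact (l - i) * s ^ (l - i) * ((real n - z / s) gchoose (l - i))
      = (\<Prod>k = 0..<l - i. real n * s - z - of_nat k * s)"
    using gchoose_homogeneous[OF assms, of "l - i" "real n * s - z"] by simp
  have "s ^ l = s ^ i * s ^ (l - i)"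
    using il by (simp flip: power_add)
  then have "fact l * s ^ l * ((-1) ^ i * (real q - 1) ^ (l - i) * (z / s gchoose i) * ((real n - z / s) gchoose (l - i)))
    = (-1) ^ i * (real q - 1) ^ (l - i) * real (l choose i) * (fact i * s ^ i * (z / s gchoose i))
        * (fact (l - i) * s ^ (l - i) * ((real n - z / s) gchoose (l - i)))"
    unfolding fact_split by (simp only: ac_simps)
  then show "fact l * s ^ l * ((-1) ^ i * (real q - 1) ^ (l - i) * (z / s gchoose i) * ((real n - z / s) gchoose (l - i)))
    = (-1) ^ i * (real q - 1) ^ (l - i) * real (l choose i)
        * (\<Prod>k = 0..<i. z - of_nat k * s) * (\<Prod>k = 0..<l - i. real n * s - z - of_nat k * s)"
    unfolding right gchoose_homogeneous[OF assms] .
qed simp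

lemma krawtchouk_hom_1:
  "krawtchouk_hom n q 1 z s = (real q - 1) * (real n * s - z) - z"
  by (simp add: krawtchouk_hom_def)

lemma krawtchouk_hom_2:
  "krawtchouk_hom n q 2 z s = (real q - 1)^2 * (real n * s - z) * (real n * s - z - s)
     - 2 * (real q - 1) * z * (real n * s - z) + z * (z - s)"
  by (simp add: krawtchouk_hom_def numeral_2_eq_2 algebra_simps)

lemma krawtchouk_hom_3:
  "krawtchouk_hom n q 3 z s = (real q - 1)^3 * (real n * s - z) * (real n * s - z - s) * (real n * s - z - 2 * s)
     - 3 * (real q - 1)^2 * z * (real n * s - z) * (real n * s - z - s)
     + 3 * (real q - 1) * z * (z - s) * (real n * s - z) - z * (z - s) * (z - 2 * s)"
  by (simp add: krawtchouk_hom_def numeral_3_eq_3 numeral_2_eq_2 algebra_simps)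

lemma fact_mult_rK:
  "fact l * rK n q l = (real q - 1) ^ l * (\<Prod>k = 0..<l. real n - of_nat k)"
  by (simp add: rK_def binomial_gbinomial gbinomial_mult_fact algebra_simps)

lemma rK_nonzero:
  assumes "q \<ge> 2" "l \<le> n"
  shows "rK n q l \<noteq> 0"
  using assms by (simp add: rK_def)

lemma below_quadratic_root:
  fixes j q c :: real
  assumes "0 \<le> j" "0 \<le> q" "j < (sqrt (q^2 + 4 * c) - q) / 2"
  shows "j * (j + q) < c"
proof -
  have lt: "2 * j + q < sqrt (q^2 + 4 * c)"
    using assms(3) by simp
  then have "q^2 + 4 * c > 0"
    using assms(1,2) by (smt (verit) real_sqrt_le_0_iff)
  moreover have "(2 * j + q)^2 < (sqrt (q^2 + 4 * c))^2"
    using lt assms(1,2) by (intro power_strict_mono) auto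
  ultimately have "(2 * j + q)^2 < q^2 + 4 * c"
    by simp
  then show ?thesis
    by (simp add: power2_eq_square algebra_simps)
qed

locale krawtchouk_weights =
  fixes n q :: nat and j e :: real
begin

definition "W = real q * (j + real q - 1)"

definition "d0 = real n - j * (real n - 1) / W"

definition "A = - (real q + j - 2) * (e * real q * (j + real q - 1))^2
  + (real n - 1) * (real q - 1) * (j + real q) * (real n * (real q - 1) - j * (real q + j - 2))
  + e * real q * (j + real q - 1) * ((real q^2 + j * real q - real q - 2 * j) * (real q + j - 2) + 2 * real n * (real q - 1))"

definition "B = (real n - 2 + j) * (real q - 1) + j * (j - 1) + e * real q * (j + real q - 1)"

definition "C = (real n - 1) * (real q - 1) * (j + real q) + e * real q * (j + real q - 1)"

definition "D = ((real n - 1) * (real q - 1) + (2 * e - 1) * (j + real q - 1) * (real q / 2))^2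
  + (j + real q - 1)^2 * ((real n - 1) * (real q - 1) - real q^2 / 4)"

definition "E = (j + real q - 1)^3 * ((real n - 1) * (real q - 2) + real n - j)"

definition "mu_d = real n * (real q - 1) * C * D * (C + W) / (A * B * (B + W))"

definition "mu_1 = e * real n * (real q - 1) * E * (C + W) / (A * B)"

definition "mu_2 = (1 - e) * real n * (real q - 1) * C * E / (A * (B + W))"

lemma cleared_identity:
  assumes "l \<in> {1, 2, 3}"
  defines "x \<equiv> real q * (real n - 1) - (real n - 2 + j)"
    and "y \<equiv> real n * W - j * (real n - 1) + e * W"
  shows "real n * (real q - 1) * (C * (4 * D) * (C + W) * krawtchouk_hom n q l x (real q) * W ^ l
      + 4 * e * E * (C + W) * (B + W) * krawtchouk_hom n q l (y - W) W * real q ^ l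
      + 4 * (1 - e) * C * E * B * krawtchouk_hom n q l y W * real q ^ l)
    + 4 * (fact l * rK n q l) * A * B * (B + W) * real q ^ l * W ^ l = 0"
proof -
  have D4: "4 * D = (2 * (real n - 1) * (real q - 1) + (2 * e - 1) * (j + real q - 1) * real q)^2
      + (j + real q - 1)^2 * (4 * (real n - 1) * (real q - 1) - real q^2)"
    unfolding D_def by (simp add: power2_eq_square field_simps)
  from assms(1) consider "l = 1" | "l = 2" | "l = 3"
    by auto
  then show ?thesis
  proof cases
    case 1
    have R: "fact 1 * rK n q 1 = (real q - 1) * real n"
      by (subst fact_mult_rK) simp
    show ?thesis
      unfolding 1 R D4 krawtchouk_hom_1 x_def y_def A_def B_def C_def E_def W_def by algebra
  next
    case 2
    have R: "fact 2 * rK n q 2 = (real q - 1)^2 * (real n * (real n - 1))"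
      by (subst fact_mult_rK) (simp add: numeral_2_eq_2)
    show ?thesis
      unfolding 2 R D4 krawtchouk_hom_2 x_def y_def A_def B_def C_def E_def W_def by algebra
  next
    case 3
    have R: "fact 3 * rK n q 3 = (real q - 1)^3 * (real n * (real n - 1) * (real n - 2))"
      by (subst fact_mult_rK) (simp add: numeral_3_eq_3 numeral_2_eq_2)
    show ?thesis
      unfolding 3 R D4 krawtchouk_hom_3 x_def y_def A_def B_def C_def E_def W_def by algebra
  qed
qed

lemma weighted_krawtchouk_sum:
  assumes "l \<in> {1, 2, 3}" and "A \<noteq> 0" "B \<noteq> 0" "B + W \<noteq> 0" "q \<noteq> 0" "W \<noteq> 0"
  shows "mu_d * krawtchouk n q l (real n - 1 - (real n - 2 + j) / real q)
      + mu_1 * krawtchouk n q l (d0 + e - 1) + mu_2 * krawtchouk n q l (d0 + e) = - rK n q l"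
proof -
  define x where "x = real q * (real n - 1) - (real n - 2 + j)"
  define y where "y = real n * W - j * (real n - 1) + e * W"
  have "real n - 1 - (real n - 2 + j) / real q = x / real q"
    using assms(5) by (simp add: x_def field_simps)
  moreover have "d0 + e - 1 = (y - W) / W" "d0 + e = y / W"
    using assms(6) by (simp_all add: d0_def y_def field_simps)
  moreover have "krawtchouk n q l (z / s) = krawtchouk_hom n q l z s / (fact l * s ^ l)"
    if "s \<noteq> 0" for z s
    using krawtchouk_homogeneous[OF that] that by (simp add: field_simps)
  ultimately have K: "krawtchouk n q l (real n - 1 - (real n - 2 + j) / real q)
        = krawtchouk_hom n q l x (real q) / (fact l * real q ^ l)"
      "krawtchouk n q l (d0 + e - 1) = krawtchouk_hom n q l (y - W) W / (fact l * W ^ l)"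
      "krawtchouk n q l (d0 + e) = krawtchouk_hom n q l y W / (fact l * W ^ l)"
    using assms(5,6) by simp_all
  define G where "G = B + W"
  define a where "a = real q ^ l"
  define b where "b = W ^ l"
  define c where "c = (fact l :: real)"
  have "real n * (real q - 1) * (C * (4 * D) * (C + W) * krawtchouk_hom n q l x (real q) * b
      + 4 * e * E * (C + W) * G * krawtchouk_hom n q l (y - W) W * a
      + 4 * (1 - e) * C * E * B * krawtchouk_hom n q l y W * a)
    + 4 * (c * rK n q l) * A * B * G * a * b = 0"
    using cleared_identity[OF assms(1)] unfolding x_def y_def G_def a_def b_def c_def .
  moreover have "a \<noteq> 0" "b \<noteq> 0" "c \<noteq> 0" "G \<noteq> 0"
    using assms(4-6) by (simp_all add: a_def b_def c_def G_def)
  ultimately show ?thesis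
    unfolding K mu_d_def mu_1_def mu_2_def G_def[symmetric] a_def[symmetric] b_def[symmetric] c_def[symmetric]
    using assms(2,3) by (simp add: field_simps) algebra
qed

context
  assumes q2: "q \<ge> 2" and j0: "0 \<le> j" and e_pos: "0 < e" and e_le1: "e \<le> 1"
    and j_small: "j * (j + real q) < (real q - 1) * (real n - 2)"
begin

lemma W_pos: "W > 0"
  using q2 j0 by (simp add: W_def)

lemma n_gt_2: "n > 2"
proof -
  have "j * (j + real q) \<ge> 0"
    using j0 by simp
  then have "(real q - 1) * (real n - 2) > 0"
    using j_small by linarith
  then show ?thesis
    using q2 by (simp add: zero_less_mult_iff)
qed

lemma B_pos: "B > 0"
proof -
  have "B = (real n - 2) * (real q - 1) + j * (real q - 2) + j * j + e * W"
    unfolding B_def W_def by algebra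
  moreover have "(real n - 2) * (real q - 1) \<ge> 0" "j * (real q - 2) \<ge> 0" "j * j \<ge> 0" "e * W > 0"
    using n_gt_2 q2 j0 e_pos W_pos by auto
  ultimately show ?thesis
    by linarith
qed

lemma A_pos: "A > 0"
proof -
  define P where "P = real n * (real q - 1) - j * (real q + j - 2)"
  have "P = (real q - 1) * (real n - 2) - j * (j + real q) + 2 * (real q - 1) + 2 * j"
    unfolding P_def by algebra
  then have P_pos: "P > 0"
    using j_small j0 q2 by (simp add: algebra_simps)
  have "A = (real q + j - 2) * e * (1 - e) * W^2 + 2 * e * W * P
      + (real n - 1) * (real q - 1) * (j + real q) * P"
    unfolding A_def W_def P_def by algebra
  moreover have "(real q + j - 2) * e * (1 - e) * W^2 \<ge> 0"
    using q2 j0 e_pos e_le1 by (intro mult_nonneg_nonneg) auto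
  moreover have "2 * e * W * P > 0"
    using e_pos W_pos P_pos by simp
  moreover have "(real n - 1) * (real q - 1) * (j + real q) * P > 0"
    using n_gt_2 q2 j0 P_pos by (intro mult_pos_pos) auto
  ultimately show ?thesis
    by linarith
qed

lemma weighted_krawtchouk_sum_normalized:
  assumes "l \<in> {1, 2, 3}"
  shows "mu_d * krawtchouk n q l (real n - 1 - (real n - 2 + j) / real q) / rK n q l
      + mu_1 * krawtchouk n q l (d0 + e - 1) / rK n q l
      + mu_2 * krawtchouk n q l (d0 + e) / rK n q l = -1"
proof -
  have "rK n q l \<noteq> 0"
    using assms n_gt_2 q2 by (intro rK_nonzero) auto
  moreover have "B + W \<noteq> 0"
    using B_pos W_pos by simp
  ultimately show ?thesis
    using weighted_krawtchouk_sum[OF assms] A_pos B_pos W_pos q2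
    by (simp add: add_divide_distrib[symmetric])
qed

end

end

theorem lemma3:
  fixes n q :: nat and d :: int and j e :: real
  assumes hn: "n \<ge> 2" and hq: "q \<ge> 2"
    and hj: "real_of_int d = real n - 1 - (real n - 2 + j) / real q"
    and hj0: "0 \<le> j"
    and hj1: "j < (sqrt ((real q)^2 + 4 * (real q - 1) * (real n - 2)) - real q) / 2"
    and he: "0 < e" "e \<le> 1"
    and hint: "real n - j * (real n - 1) / (real q * (j + real q - 1)) + e \<in> \<int>"
  shows "let n' = real n; q' = real q;
             d0 = n' - j * (n' - 1) / (q' * (j + q' - 1));
             A = - (q' + j - 2) * (e * q' * (j + q' - 1))^2
                 + (n' - 1) * (q' - 1) * (j + q') * (n' * (q' - 1) - j * (q' + j - 2))
                 + e * q' * (j + q' - 1) * ((q'^2 + j * q' - q' - 2 * j) * (q' + j - 2) + 2 * n' * (q' - 1));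
             B = (n' - 2 + j) * (q' - 1) + j * (j - 1) + e * q' * (j + q' - 1);
             C = (n' - 1) * (q' - 1) * (j + q') + e * q' * (j + q' - 1);
             D = ((n' - 1) * (q' - 1) + (2 * e - 1) * (j + q' - 1) * (q' / 2))^2
                 + (j + q' - 1)^2 * ((n' - 1) * (q' - 1) - q'^2 / 4);
             E = (j + q' - 1)^3 * ((n' - 1) * (q' - 2) + n' - j);
             mu_d = n' * (q' - 1) * C * D * (C + q' * (j + q' - 1)) / (A * B * (B + q' * (j + q' - 1)));
             mu_1 = e * n' * (q' - 1) * E * (C + q' * (j + q' - 1)) / (A * B);
             mu_2 = (1 - e) * n' * (q' - 1) * C * E / (A * (B + q' * (j + q' - 1)))
         in \<forall>l\<in>{1,2,3}.
              mu_d * krawtchouk n q l (real_of_int d) / rK n q l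
              + mu_1 * krawtchouk n q l (d0 + e - 1) / rK n q l
              + mu_2 * krawtchouk n q l (d0 + e) / rK n q l = -1"
proof -
  interpret krawtchouk_weights n q j e .
  have "j * (j + real q) < (real q - 1) * (real n - 2)"
    by (rule below_quadratic_root[OF hj0 _ hj1[unfolded mult.assoc]]) simp
  then have "\<forall>l\<in>{1,2,3}. mu_d * krawtchouk n q l (real_of_int d) / rK n q l
      + mu_1 * krawtchouk n q l (d0 + e - 1) / rK n q l
      + mu_2 * krawtchouk n q l (d0 + e) / rK n q l = -1"
    unfolding hj using weighted_krawtchouk_sum_normalized[OF hq hj0 he] by blast
  then show ?thesis
    unfolding Let_def mu_d_def mu_1_def mu_2_def A_def B_def C_def D_def E_def d0_def W_def .
qed

end
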